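(* Let $S$ be a connected shape in the triangular grid with at least two points, and let $v \in S$. Then $v$ is erodable with respect to $S$ if and only if $v$ has exactly one local boundary $B$ in $S$ and $B$ is a local outer boundary.
   Context: The triangular grid $G$ has as vertices ("points") the points of the regular triangular lattice in the plane, two points adjacent iff at unit distance; each point has six incident edges, cyclically ordered clockwise. A shape is a finite set of points, identified with its induced subgraph. A connected shape $S$ partitions the plane into faces; the unique unbounded one is the outer face, and a bounded face containing a grid point not in $S$ is a hole. The outer boundary of $S$ is the set of points of $S$ lying on the boundary of the outer face. A boundary point of $S$ is a point of $S$ adjacent to some point not in $S$. For a boundary point $v$, a local boundary of $v$ (w.r.t. $S$) is a maximal clockwise cyclic interval of consecutive edges incident to $v$ whose other endpoints are not in $S$; it is a local outer boundary if these other endpoints lie in the outer face of $S$. A point $v \in S$ is redundant if the subgraph induced by the neighbors of $v$ in $S$ is connected (i.e., removing $v$ does not disconnect its 1-hop neighborhood in $S$). A point is erodable w.r.t. $S$ if it is redundant and lies on the outer boundary of $S$. *)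

theory Defs
  imports "HOL-Analysis.Analysis"
begin

text \<open>Points of the triangular lattice: pairs (a,b) standing for a*e1 + b*e2,
  with e1 = (1,0), e2 = (1/2, sqrt 3 / 2).\<close>
type_synonym point = "int \<times> int"

text \<open>The six directions, listed in clockwise cyclic order (index i, i < 6).\<close>
definition dir :: "nat \<Rightarrow> int \<times> int" where
  "dir i = [(1,0), (1,-1), (0,-1), (-1,0), (-1,1), (0,1)] ! (i mod 6)"

definition nbr :: "point \<Rightarrow> nat \<Rightarrow> point" where
  "nbr p i = (fst p + fst (dir i), snd p + snd (dir i))"

definition adj :: "point \<Rightarrow> point \<Rightarrow> bool" where
  "adj p q \<longleftrightarrow> (\<exists>i<6. q = nbr p i)"

definition emb :: "point \<Rightarrow> complex" where
  "emb p = Complex (of_int (fst p) + of_int (snd p) / 2) (of_int (snd p) * sqrt 3 / 2)"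

definition grid_connected :: "point set \<Rightarrow> bool" where
  "grid_connected A \<longleftrightarrow>
     (\<forall>p\<in>A. \<forall>q\<in>A. (p, q) \<in> {(x, y). x \<in> A \<and> y \<in> A \<and> adj x y}\<^sup>*)"

definition connected_shape :: "point set \<Rightarrow> bool" where
  "connected_shape S \<longleftrightarrow> finite S \<and> grid_connected S"

definition drawing :: "point set \<Rightarrow> complex set" where
  "drawing S = emb ` S \<union>
     (\<Union>{closed_segment (emb p) (emb q) | p q. p \<in> S \<and> q \<in> S \<and> adj p q})"

definition outer_face :: "point set \<Rightarrow> complex set" where
  "outer_face S = {x. \<not> bounded (connected_component_set (- drawing S) x)}"

definition outer_boundary :: "point set \<Rightarrow> point set" where
  "outer_boundary S = {v \<in> S. emb v \<in> frontier (outer_face S)}"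

definition redundant :: "point set \<Rightarrow> point \<Rightarrow> bool" where
  "redundant S v \<longleftrightarrow> v \<in> S \<and> grid_connected {q \<in> S. adj v q}"

definition erodable :: "point set \<Rightarrow> point \<Rightarrow> bool" where
  "erodable S v \<longleftrightarrow> redundant S v \<and> v \<in> outer_boundary S"

definition cyclic_interval :: "nat set \<Rightarrow> bool" where
  "cyclic_interval I \<longleftrightarrow> (\<exists>s<6. \<exists>k. 1 \<le> k \<and> k \<le> 6 \<and> I = {(s + j) mod 6 | j. j < k})"

definition free_interval :: "point set \<Rightarrow> point \<Rightarrow> nat set \<Rightarrow> bool" where
  "free_interval S v I \<longleftrightarrow> cyclic_interval I \<and> (\<forall>i\<in>I. nbr v i \<notin> S)"

definition local_boundary :: "point set \<Rightarrow> point \<Rightarrow> nat set \<Rightarrow> bool" where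
  "local_boundary S v I \<longleftrightarrow> free_interval S v I \<and>
     (\<forall>J. free_interval S v J \<and> I \<subseteq> J \<longrightarrow> J = I)"

definition local_outer_boundary :: "point set \<Rightarrow> point \<Rightarrow> nat set \<Rightarrow> bool" where
  "local_outer_boundary S v I \<longleftrightarrow> local_boundary S v I \<and>
     (\<forall>i\<in>I. emb (nbr v i) \<in> outer_face S)"

end

theory Submission
  imports Defs
begin

text \<open>
  Let \<open>F\<close> be the set of directions \<open>i\<close> whose neighbour \<open>nbr v i\<close> is not in \<open>S\<close>. The
  neighbours in \<open>S\<close> form a path on the hexagon of neighbours exactly when their directions are
  connected on the 6-cycle, and a nonempty proper subset of the 6-cycle is connected iff its
  complement \<open>F\<close> is a single cyclic interval. Since the local boundaries of \<open>v\<close> are the maximal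
  cyclic intervals inside \<open>F\<close>, redundancy of \<open>v\<close> means that \<open>v\<close> has exactly one local boundary.

  For the outer face, compute in lattice coordinates. A small disc around \<open>v\<close> meets the plane
  minus the drawing only in the spokes towards free neighbours and in the open triangular sectors
  between consecutive neighbours; a sector between two neighbours in \<open>S\<close> lies inside a triangle
  bounded by drawn edges, and every other piece is joined to a free neighbour by a segment missing
  the drawing. Hence \<open>v\<close> lies on the outer boundary iff some free neighbour lies in the outer
  face. Finally, consecutive free neighbours are joined by a lattice edge that misses the drawing,
  so a local boundary lies either entirely in the outer face or entirely outside it.
\<close>

section \<open>Lattice coordinates and directions\<close>

text \<open>\<open>(lat_x z, lat_y z)\<close> are the coordinates of \<open>z\<close> in the basis \<open>emb (1, 0)\<close>, \<open>emb (0, 1)\<close>.\<close>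

definition lat_x :: "complex \<Rightarrow> real" where
  "lat_x z = Re z - Im z / sqrt 3"

definition lat_y :: "complex \<Rightarrow> real" where
  "lat_y z = 2 * Im z / sqrt 3"

definition dir_vec :: "nat \<Rightarrow> complex" where
  "dir_vec i = emb (dir i)"

lemma lat_eqI:
  assumes "lat_x z = lat_x w" and "lat_y z = lat_y w"
  shows "z = w"
proof -
  have "Im z = Im w" using assms(2) by (simp add: lat_y_def)
  moreover from this have "Re z = Re w" using assms(1) by (simp add: lat_x_def)
  ultimately show ?thesis by (simp add: complex_eq_iff)
qed

lemma lat_x_add [simp]: "lat_x (z + w) = lat_x z + lat_x w"
  by (simp add: lat_x_def add_divide_distrib)

lemma lat_y_add [simp]: "lat_y (z + w) = lat_y z + lat_y w"
  by (simp add: lat_y_def algebra_simps add_divide_distrib)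

lemma lat_x_diff [simp]: "lat_x (z - w) = lat_x z - lat_x w"
  by (simp add: lat_x_def diff_divide_distrib)

lemma lat_y_diff [simp]: "lat_y (z - w) = lat_y z - lat_y w"
  by (simp add: lat_y_def algebra_simps diff_divide_distrib)

lemma lat_x_scaleR [simp]: "lat_x (c *\<^sub>R z) = c * lat_x z"
  by (simp add: lat_x_def algebra_simps)

lemma lat_y_scaleR [simp]: "lat_y (c *\<^sub>R z) = c * lat_y z"
  by (simp add: lat_y_def algebra_simps)

lemma lat_x_emb [simp]: "lat_x (emb p) = of_int (fst p)"
  by (simp add: lat_x_def emb_def)

lemma lat_y_emb [simp]: "lat_y (emb p) = of_int (snd p)"
  by (simp add: lat_y_def emb_def)

lemma lat_x_dir_vec [simp]: "lat_x (dir_vec i) = of_int (fst (dir i))"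
  by (simp add: dir_vec_def)

lemma lat_y_dir_vec [simp]: "lat_y (dir_vec i) = of_int (snd (dir i))"
  by (simp add: dir_vec_def)

lemma emb_eq_iff [simp]: "emb p = emb q \<longleftrightarrow> p = q"
proof
  assume "emb p = emb q"
  then have "lat_x (emb p) = lat_x (emb q)" "lat_y (emb p) = lat_y (emb q)" by simp_all
  then show "p = q" by (simp add: prod_eq_iff)
qed simp

lemma emb_nbr: "emb (nbr p i) = emb p + dir_vec i"
  by (rule lat_eqI) (simp_all add: nbr_def)

lemma less_6_cases: "(i::nat) < 6 \<Longrightarrow> i = 0 \<or> i = 1 \<or> i = 2 \<or> i = 3 \<or> i = 4 \<or> i = 5"
  by auto

lemma mod_6_cases: "(n::nat) mod 6 = 0 \<or> n mod 6 = 1 \<or> n mod 6 = 2 \<or> n mod 6 = 3 \<or> n mod 6 = 4 \<or> n mod 6 = 5"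
  using less_6_cases[of "n mod 6"] by simp

lemma dir_simps:
  "dir 0 = (1, 0)" "dir 1 = (1, -1)" "dir (Suc 0) = (1, -1)" "dir 2 = (0, -1)" "dir 3 = (-1, 0)"
  "dir 4 = (-1, 1)" "dir 5 = (0, 1)" "dir 6 = (1, 0)"
  "dir (Suc 1) = (0, -1)" "dir (Suc 2) = (-1, 0)" "dir (Suc 3) = (-1, 1)" "dir (Suc 4) = (0, 1)"
  "dir (Suc 5) = (1, 0)" "dir (Suc (Suc 0)) = (0, -1)" "dir (Suc (Suc (Suc 0))) = (-1, 0)"
  "dir (Suc (Suc (Suc (Suc 0)))) = (-1, 1)" "dir (Suc (Suc (Suc (Suc (Suc 0))))) = (0, 1)"
  "dir (Suc (Suc (Suc (Suc (Suc (Suc 0)))))) = (1, 0)"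
  by (simp_all add: dir_def)

lemma dir_mod: "dir (i mod 6) = dir i"
  by (simp add: dir_def)

lemma nbr_mod: "nbr p (i mod 6) = nbr p i"
  by (simp add: nbr_def dir_mod)

lemma dir_range: "fst (dir i) \<in> {-1, 0, 1}" "snd (dir i) \<in> {-1, 0, 1}"
proof -
  have "i mod 6 < 6" by simp
  then show "fst (dir i) \<in> {-1, 0, 1}" "snd (dir i) \<in> {-1, 0, 1}"
    unfolding dir_def using less_6_cases[of "i mod 6"] by auto
qed

lemma dir_vec_nonzero: "dir_vec i \<noteq> 0"
proof
  assume "dir_vec i = 0"
  then have "lat_x (dir_vec i) = 0" "lat_y (dir_vec i) = 0" by (simp_all add: lat_x_def lat_y_def)
  then have "dir (i mod 6) = (0, 0)" by (simp add: dir_mod prod_eq_iff)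
  moreover have "i mod 6 < 6" by simp
  ultimately show False using less_6_cases[of "i mod 6"] by (auto simp: dir_simps)
qed

lemma dir_add_3: "dir (i + 3) = (- fst (dir i), - snd (dir i))"
proof -
  have "i mod 6 < 6" by simp
  moreover have "(i + 3) mod 6 = (i mod 6 + 3) mod 6" by (simp add: mod_add_left_eq)
  ultimately show ?thesis unfolding dir_def using less_6_cases[of "i mod 6"] by auto
qed

lemma dir_Suc: "dir (Suc i) = (fst (dir i) + fst (dir (i + 2)), snd (dir i) + snd (dir (i + 2)))"
proof -
  have "i mod 6 < 6" by simp
  moreover have "(i + 2) mod 6 = (i mod 6 + 2) mod 6" by (metis mod_add_left_eq)
  moreover have "Suc i mod 6 = (i mod 6 + 1) mod 6" by (simp add: mod_Suc_eq)
  ultimately show ?thesis unfolding dir_def using less_6_cases[of "i mod 6"] by auto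
qed

lemma nbr_nbr_add_3: "nbr (nbr p i) (i + 3) = p"
  using dir_add_3[of i] by (simp add: nbr_def prod_eq_iff)

lemma nbr_nbr_add_2: "nbr (nbr p i) (i + 2) = nbr p (Suc i)"
  using dir_Suc[of i] by (simp add: nbr_def prod_eq_iff)

lemma adj_nbr: "adj p (nbr p i)"
  unfolding adj_def by (intro exI[of _ "i mod 6"]) (simp add: nbr_mod)

lemma adj_sym: "adj p q \<Longrightarrow> adj q p"
  unfolding adj_def using adj_nbr[of q "_ + 3"] nbr_nbr_add_3 adj_def by metis

lemma adj_nbr_Suc: "adj (nbr p i) (nbr p (Suc i))"
  using adj_nbr[of "nbr p i" "i + 2"] by (simp only: nbr_nbr_add_2)


section \<open>Points of the drawing\<close>

lemma abs_int_less_2: "\<bar>real_of_int d\<bar> < 2 \<Longrightarrow> d \<in> {-1, 0, 1}"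
proof -
  assume "\<bar>real_of_int d\<bar> < 2"
  then have "\<bar>d\<bar> < 2" by linarith
  then show ?thesis by auto
qed

lemma abs_mult_dir_le: "\<bar>t * real_of_int (fst (dir i))\<bar> \<le> \<bar>t\<bar>" "\<bar>t * real_of_int (snd (dir i))\<bar> \<le> \<bar>t\<bar>"
  using dir_range[of i] by (auto simp: abs_mult)

lemma edge_points_eq_near:
  assumes eq: "emb p + t *\<^sub>R dir_vec i = emb q + s *\<^sub>R dir_vec j"
    and "\<bar>t\<bar> < 1" "\<bar>s\<bar> \<le> 1"
  shows "fst q - fst p \<in> {-1, 0, 1}" "snd q - snd p \<in> {-1, 0, 1}"
proof -
  have "real_of_int (fst q - fst p) = t * of_int (fst (dir i)) - s * of_int (fst (dir j))"
    using arg_cong[OF eq, of lat_x] by simp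
  moreover have "\<bar>t * of_int (fst (dir i)) - s * of_int (fst (dir j))\<bar> < (2 :: real)"
    using abs_triangle_ineq4[of "t * of_int (fst (dir i))" "s * of_int (fst (dir j))"]
      abs_mult_dir_le[of t i] abs_mult_dir_le[of s j] assms(2,3) by linarith
  ultimately show "fst q - fst p \<in> {-1, 0, 1}" by (intro abs_int_less_2) simp
  have "real_of_int (snd q - snd p) = t * of_int (snd (dir i)) - s * of_int (snd (dir j))"
    using arg_cong[OF eq, of lat_y] by simp
  moreover have "\<bar>t * of_int (snd (dir i)) - s * of_int (snd (dir j))\<bar> < (2 :: real)"
    using abs_triangle_ineq4[of "t * of_int (snd (dir i))" "s * of_int (snd (dir j))"]
      abs_mult_dir_le[of t i] abs_mult_dir_le[of s j] assms(2,3) by linarith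
  ultimately show "snd q - snd p \<in> {-1, 0, 1}" by (intro abs_int_less_2) simp
qed

lemma lattice_point_on_edge:
  assumes "j < 6" "0 \<le> s" "s \<le> 1" and eq: "emb q = emb p + s *\<^sub>R dir_vec j"
  shows "q = p \<or> q = nbr p j"
proof -
  obtain a b where p: "p = (a, b)" by (cases p)
  obtain a' b' where q: "q = (a', b')" by (cases q)
  have "a - a' \<in> {-1, 0, 1}" "b - b' \<in> {-1, 0, 1}"
    using edge_points_eq_near[of q 0 0 p s j] eq assms(2,3) by (simp_all add: p q)
  moreover have "of_int a' = of_int a + s * of_int (fst (dir j))"
    "of_int b' = of_int b + s * (of_int (snd (dir j)) :: real)"
    using arg_cong[OF eq, of lat_x] arg_cong[OF eq, of lat_y] by (simp_all add: p q)
  ultimately show ?thesis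
    using less_6_cases[OF assms(1)] assms(2,3)
    by (simp add: p q nbr_def) (elim disjE; simp add: dir_simps)
qed

lemma edge_interior_not_lattice:
  assumes "j < 6" "0 < t" "t < 1"
  shows "emb p + t *\<^sub>R dir_vec j \<noteq> emb q"
proof
  assume eq: "emb p + t *\<^sub>R dir_vec j = emb q"
  then consider "q = p" | "q = nbr p j"
    using lattice_point_on_edge[OF assms(1), of t q p] assms by fastforce
  then show False
  proof cases
    case 1
    then have "t *\<^sub>R dir_vec j = 0" using eq by simp
    then show False using assms(2) dir_vec_nonzero by simp
  next
    case 2
    then have "(1 - t) *\<^sub>R dir_vec j = 0" using eq by (simp add: emb_nbr algebra_simps)
    then show False using assms(3) dir_vec_nonzero by simp
  qed
qed

lemma edge_interiors_meet:
  assumes "i < 6" "j < 6" "0 < t" "t < 1" "0 \<le> s" "s \<le> 1"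
    and eq: "emb p + t *\<^sub>R dir_vec i = emb q + s *\<^sub>R dir_vec j"
  shows "(q = p \<and> nbr q j = nbr p i) \<or> (q = nbr p i \<and> nbr q j = p)"
proof -
  obtain a b where p: "p = (a, b)" by (cases p)
  obtain a' b' where q: "q = (a', b')" by (cases q)
  have "a' - a \<in> {-1, 0, 1}" "b' - b \<in> {-1, 0, 1}"
    using edge_points_eq_near[OF eq] assms(3-6) by (simp_all add: p q)
  moreover have "of_int a + t * of_int (fst (dir i)) = of_int a' + s * of_int (fst (dir j))"
    "of_int b + t * of_int (snd (dir i)) = of_int b' + s * (of_int (snd (dir j)) :: real)"
    using arg_cong[OF eq, of lat_x] arg_cong[OF eq, of lat_y] by (simp_all add: p q)
  ultimately show ?thesis
    using less_6_cases[OF assms(1)] less_6_cases[OF assms(2)] assms(3-6)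
    by (simp add: p q nbr_def) (elim disjE; simp add: dir_simps)
qed

lemma in_drawingE:
  assumes "z \<in> drawing S"
  obtains (vertex) q where "q \<in> S" "z = emb q"
  | (edge) p j s where "p \<in> S" "j < 6" "nbr p j \<in> S" "0 \<le> s" "s \<le> 1"
      "z = emb p + s *\<^sub>R dir_vec j"
proof (cases "z \<in> emb ` S")
  case True
  then show ?thesis using vertex by blast
next
  case False
  then obtain p q where pq: "p \<in> S" "q \<in> S" "adj p q" "z \<in> closed_segment (emb p) (emb q)"
    using assms unfolding drawing_def by blast
  then obtain j where j: "j < 6" "q = nbr p j" unfolding adj_def by blast
  from pq(4) obtain s where s: "0 \<le> s" "s \<le> 1" "z = (1 - s) *\<^sub>R emb p + s *\<^sub>R emb q"
    unfolding in_segment by blast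
  have "z = emb p + s *\<^sub>R dir_vec j" using s(3) unfolding j emb_nbr by (simp add: algebra_simps)
  then show ?thesis using edge pq j s by blast
qed

lemma edge_point_in_drawing:
  assumes "p \<in> S" "nbr p j \<in> S" "0 \<le> s" "s \<le> 1"
  shows "emb p + s *\<^sub>R dir_vec j \<in> drawing S"
proof -
  have "emb p + s *\<^sub>R dir_vec j \<in> closed_segment (emb p) (emb (nbr p j))"
    unfolding in_segment emb_nbr using assms(3,4) by (intro exI[of _ s]) (simp add: algebra_simps)
  then show ?thesis using assms(1,2) adj_nbr unfolding drawing_def by blast
qed

lemma edge_in_drawing:
  "p \<in> S \<Longrightarrow> q \<in> S \<Longrightarrow> adj p q \<Longrightarrow> closed_segment (emb p) (emb q) \<subseteq> drawing S"
  unfolding drawing_def by blast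

lemma emb_in_drawing_iff [simp]: "emb q \<in> drawing S \<longleftrightarrow> q \<in> S"
proof
  assume "emb q \<in> drawing S"
  then show "q \<in> S"
  proof (cases rule: in_drawingE)
    case (edge p j s)
    then show ?thesis using lattice_point_on_edge[of j s q p] by auto
  qed simp
qed (simp add: drawing_def)

lemma edge_interior_notin_drawing:
  assumes "j < 6" "0 < t" "t < 1" "p \<notin> S \<or> nbr p j \<notin> S"
  shows "emb p + t *\<^sub>R dir_vec j \<notin> drawing S"
proof
  assume "emb p + t *\<^sub>R dir_vec j \<in> drawing S"
  then show False
  proof (cases rule: in_drawingE)
    case (vertex q)
    then show False using edge_interior_not_lattice assms(1-3) by blast
  next
    case (edge q i s)
    then show False
      using edge_interiors_meet[OF assms(1) edge(2) assms(2,3) edge(4-6)] assms(4) by auto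
  qed
qed

lemma drawing_on_lattice_line:
  assumes "z \<in> drawing S"
  shows "lat_x z \<in> \<int> \<or> lat_y z \<in> \<int> \<or> lat_x z + lat_y z \<in> \<int>"
  using assms
proof (cases rule: in_drawingE)
  case (edge p j s)
  show ?thesis using less_6_cases[OF \<open>j < 6\<close>] \<open>z = _\<close> by (elim disjE) (simp_all add: dir_simps)
qed simp

lemma Ints_not_near_int:
  fixes y :: real
  assumes "0 < \<bar>y - of_int n\<bar>" "\<bar>y - of_int n\<bar> < 1"
  shows "y \<notin> \<int>"
proof
  assume "y \<in> \<int>"
  then obtain m where "y = of_int m" by (auto elim: Ints_cases)
  then have "(0 :: real) < \<bar>of_int (m - n)\<bar>" "\<bar>of_int (m - n)\<bar> < (1 :: real)" using assms by simp_all
  then have "0 < \<bar>m - n\<bar>" "\<bar>m - n\<bar> < 1"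
    by (simp_all only: of_int_abs[symmetric] of_int_0_less_iff of_int_less_1_iff)
  then show False by linarith
qed

lemma triangle_interior_off_lattice_lines:
  assumes "k < 6" "0 < \<alpha>" "0 < \<beta>" "\<alpha> + \<beta> < 1"
    and z: "z = emb p + \<alpha> *\<^sub>R dir_vec k + \<beta> *\<^sub>R dir_vec (Suc k)"
  shows "lat_x z \<notin> \<int> \<and> lat_y z \<notin> \<int> \<and> lat_x z + lat_y z \<notin> \<int>"
proof -
  have x: "lat_x z - of_int (fst p) = \<alpha> * of_int (fst (dir k)) + \<beta> * of_int (fst (dir (Suc k)))"
    using z by simp
  have y: "lat_y z - of_int (snd p) = \<alpha> * of_int (snd (dir k)) + \<beta> * of_int (snd (dir (Suc k)))"
    using z by simp
  have xy: "lat_x z + lat_y z - of_int (fst p + snd p) =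
      \<alpha> * of_int (fst (dir k) + snd (dir k)) + \<beta> * of_int (fst (dir (Suc k)) + snd (dir (Suc k)))"
    using z by (simp add: algebra_simps)
  have "0 < \<bar>lat_x z - of_int (fst p)\<bar> \<and> \<bar>lat_x z - of_int (fst p)\<bar> < 1"
    unfolding x using less_6_cases[OF assms(1)] assms(2-4) by (elim disjE) (simp_all add: dir_simps abs_if)
  moreover have "0 < \<bar>lat_y z - of_int (snd p)\<bar> \<and> \<bar>lat_y z - of_int (snd p)\<bar> < 1"
    unfolding y using less_6_cases[OF assms(1)] assms(2-4) by (elim disjE) (simp_all add: dir_simps abs_if)
  moreover have "0 < \<bar>lat_x z + lat_y z - of_int (fst p + snd p)\<bar> \<and>
      \<bar>lat_x z + lat_y z - of_int (fst p + snd p)\<bar> < 1"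
    unfolding xy using less_6_cases[OF assms(1)] assms(2-4) by (elim disjE) (simp_all add: dir_simps abs_if)
  ultimately show ?thesis using Ints_not_near_int by blast
qed

lemma triangle_interior_notin_drawing:
  assumes "k < 6" "0 < \<alpha>" "0 < \<beta>" "\<alpha> + \<beta> < 1"
  shows "emb p + \<alpha> *\<^sub>R dir_vec k + \<beta> *\<^sub>R dir_vec (Suc k) \<notin> drawing S"
  using drawing_on_lattice_line triangle_interior_off_lattice_lines[OF assms refl] by blast


section \<open>The outer face near a point of the shape\<close>

definition free_dirs :: "point set \<Rightarrow> point \<Rightarrow> nat set" where
  "free_dirs S v = {i. i < 6 \<and> nbr v i \<notin> S}"

lemma outer_face_notin_drawing: "x \<in> outer_face S \<Longrightarrow> x \<notin> drawing S"
proof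
  assume "x \<in> outer_face S" "x \<in> drawing S"
  then have "connected_component_set (- drawing S) x = {}"
    using connected_component_eq_empty[of "- drawing S" x] by blast
  moreover have "\<not> bounded (connected_component_set (- drawing S) x)"
    using \<open>x \<in> outer_face S\<close> unfolding outer_face_def by simp
  ultimately show False by (metis bounded_empty)
qed

lemma outer_face_segment:
  assumes "closed_segment x y \<subseteq> - drawing S" "x \<in> outer_face S"
  shows "y \<in> outer_face S"
proof -
  have "closed_segment x y \<subseteq> connected_component_set (- drawing S) x"
    by (rule connected_component_maximal) (use assms(1) in auto)
  then have "connected_component_set (- drawing S) y = connected_component_set (- drawing S) x"
    by (intro connected_component_eq) auto
  then show ?thesis using assms(2) unfolding outer_face_def by simp
qed

lemma spoke_segment_avoids_drawing:
  assumes "j < 6" "nbr v j \<notin> S" "0 < t" "t \<le> 1"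
  shows "closed_segment (emb v + t *\<^sub>R dir_vec j) (emb (nbr v j)) \<subseteq> - drawing S"
proof
  fix y assume "y \<in> closed_segment (emb v + t *\<^sub>R dir_vec j) (emb (nbr v j))"
  then obtain u where u: "0 \<le> u" "u \<le> 1"
      "y = (1 - u) *\<^sub>R (emb v + t *\<^sub>R dir_vec j) + u *\<^sub>R emb (nbr v j)"
    unfolding in_segment by blast
  define t' where "t' = 1 - (1 - u) * (1 - t)"
  have y: "y = emb v + t' *\<^sub>R dir_vec j" unfolding u(3) t'_def emb_nbr by (simp add: algebra_simps)
  have "0 \<le> (1 - u) * (1 - t)" using u assms(4) by simp
  moreover have "(1 - u) * (1 - t) \<le> 1 - t" using u assms(4) by (intro mult_left_le_one_le) auto
  ultimately have t': "0 < t'" "t' \<le> 1" unfolding t'_def using assms(3) by linarith+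
  show "y \<in> - drawing S"
  proof (cases "t' = 1")
    case True
    then show ?thesis using y assms(2) by (simp add: emb_nbr[symmetric])
  next
    case False
    then show ?thesis using edge_interior_notin_drawing[OF assms(1) t'(1)] t'(2) assms(2) y by auto
  qed
qed

lemma edge_avoids_drawing:
  assumes "i < 6" "p \<notin> S" "nbr p i \<notin> S"
  shows "closed_segment (emb p) (emb (nbr p i)) \<subseteq> - drawing S"
proof
  fix y assume "y \<in> closed_segment (emb p) (emb (nbr p i))"
  then obtain u where u: "0 \<le> u" "u \<le> 1" "y = (1 - u) *\<^sub>R emb p + u *\<^sub>R emb (nbr p i)"
    unfolding in_segment by blast
  have y: "y = emb p + u *\<^sub>R dir_vec i" unfolding u(3) emb_nbr by (simp add: algebra_simps)
  show "y \<in> - drawing S"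
  proof (cases "u = 0 \<or> u = 1")
    case True
    then show ?thesis using y assms(2,3) by (auto simp: emb_nbr[symmetric])
  next
    case False
    then show ?thesis using edge_interior_notin_drawing[OF assms(1), of u p S] u assms(2) y by auto
  qed
qed

lemma triangle_segment_avoids_drawing:
  assumes "k < 6" "0 < \<alpha>" "0 < \<beta>" "\<alpha> + \<beta> < 1" "j = k \<or> j = Suc k" "nbr v j \<notin> S"
  shows "closed_segment (emb v + \<alpha> *\<^sub>R dir_vec k + \<beta> *\<^sub>R dir_vec (Suc k)) (emb (nbr v j))
    \<subseteq> - drawing S"
proof
  fix y assume "y \<in> closed_segment (emb v + \<alpha> *\<^sub>R dir_vec k + \<beta> *\<^sub>R dir_vec (Suc k)) (emb (nbr v j))"
  then obtain u where u: "0 \<le> u" "u \<le> 1"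
      "y = (1 - u) *\<^sub>R (emb v + \<alpha> *\<^sub>R dir_vec k + \<beta> *\<^sub>R dir_vec (Suc k)) + u *\<^sub>R emb (nbr v j)"
    unfolding in_segment by blast
  show "y \<in> - drawing S"
  proof (cases "u = 1")
    case True
    then show ?thesis using u(3) assms(6) by simp
  next
    case False
    then have u1: "0 < 1 - u" using u by simp
    have pos: "0 < (1 - u) * \<alpha>" "0 < (1 - u) * \<beta>" using u1 assms(2,3) by simp_all
    have sum: "(1 - u) * (\<alpha> + \<beta>) < (1 - u) * 1"
      using u1 assms(4) by (intro mult_strict_left_mono) auto
    from assms(5) show ?thesis
    proof
      assume j: "j = k"
      have "y = emb v + ((1 - u) * \<alpha> + u) *\<^sub>R dir_vec k + ((1 - u) * \<beta>) *\<^sub>R dir_vec (Suc k)"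
        unfolding u(3) j emb_nbr by (simp add: algebra_simps)
      moreover have "\<dots> \<notin> drawing S"
        by (rule triangle_interior_notin_drawing[OF assms(1)]) (use pos sum u in \<open>auto simp: algebra_simps\<close>)
      ultimately show ?thesis by simp
    next
      assume j: "j = Suc k"
      have "y = emb v + ((1 - u) * \<alpha>) *\<^sub>R dir_vec k + ((1 - u) * \<beta> + u) *\<^sub>R dir_vec (Suc k)"
        unfolding u(3) j emb_nbr by (simp add: algebra_simps)
      moreover have "\<dots> \<notin> drawing S"
        by (rule triangle_interior_notin_drawing[OF assms(1)]) (use pos sum u in \<open>auto simp: algebra_simps\<close>)
      ultimately show ?thesis by simp
    qed
  qed
qed

lemma filled_triangle_not_outer:
  assumes "v \<in> S" "nbr v k \<in> S" "nbr v (Suc k) \<in> S" "0 \<le> \<alpha>" "0 \<le> \<beta>" "\<alpha> + \<beta> \<le> 1"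
    and x: "x = emb v + \<alpha> *\<^sub>R dir_vec k + \<beta> *\<^sub>R dir_vec (Suc k)"
  shows "x \<notin> outer_face S"
proof
  assume xo: "x \<in> outer_face S"
  define A B C where "A = emb v" and "B = emb (nbr v k)" and "C = emb (nbr v (Suc k))"
  define T where "T = convex hull {A, B, C}"
  have "x = (1 - \<alpha> - \<beta>) *\<^sub>R A + \<alpha> *\<^sub>R B + \<beta> *\<^sub>R C"
    unfolding x A_def B_def C_def emb_nbr by (simp add: algebra_simps)
  then have xT: "x \<in> T" unfolding T_def convex_hull_3 using assms(4-6)
    by (intro CollectI exI[of _ "1 - \<alpha> - \<beta>"] exI[of _ \<alpha>] exI[of _ \<beta>]) auto
  have "frontier T = closed_segment A B \<union> closed_segment B C \<union> closed_segment C A"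
    unfolding T_def by (rule frontier_of_triangle) simp
  also have "\<dots> \<subseteq> drawing S"
    unfolding A_def B_def C_def using assms(1-3) adj_nbr adj_nbr_Suc adj_sym[OF adj_nbr]
    by (intro Un_least edge_in_drawing) auto
  finally have fr: "frontier T \<subseteq> drawing S" .
  define K where "K = connected_component_set (- drawing S) x"
  have "K \<subseteq> T"
  proof (rule ccontr)
    assume "\<not> K \<subseteq> T"
    moreover have "x \<in> K" unfolding K_def using outer_face_notin_drawing[OF xo] by simp
    moreover have "connected K" unfolding K_def by simp
    ultimately have "K \<inter> frontier T \<noteq> {}" using xT connected_Int_frontier by blast
    moreover have "K \<subseteq> - drawing S" unfolding K_def by (rule connected_component_subset)
    ultimately show False using fr by blast
  qed
  moreover have "bounded T" unfolding T_def by (simp add: bounded_convex_hull finite_imp_bounded)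
  ultimately have "bounded K" using bounded_subset by blast
  then show False using xo unfolding outer_face_def K_def by simp
qed

lemma hexagon_sector_decomposition:
  fixes u w :: real
  assumes "\<bar>u\<bar> < 1/4" "\<bar>w\<bar> < 1/4" "u \<noteq> 0 \<or> w \<noteq> 0"
  obtains k \<alpha> \<beta> where "k < 6" "0 < \<alpha>" "0 \<le> \<beta>" "\<alpha> + \<beta> < 1"
    "u = \<alpha> * of_int (fst (dir k)) + \<beta> * of_int (fst (dir (Suc k)))"
    "w = \<alpha> * of_int (snd (dir k)) + \<beta> * of_int (snd (dir (Suc k)))"
proof -
  have bounds: "-1/4 < u" "u < 1/4" "-1/4 < w" "w < 1/4" using assms(1,2) by linarith+
  consider "0 < u + w" "w \<le> 0" | "0 < u" "u + w \<le> 0" | "w < 0" "u \<le> 0"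
    | "u + w < 0" "0 \<le> w" | "u < 0" "0 \<le> u + w" | "0 < w" "0 \<le> u"
    using assms(3) by argo
  then show thesis
  proof cases
    case 1
    show thesis by (rule that[of 0 "u + w" "- w"]) (use 1 bounds in \<open>simp_all add: dir_simps\<close>)
  next
    case 2
    show thesis by (rule that[of 1 u "- u - w"]) (use 2 bounds in \<open>simp_all add: dir_simps\<close>)
  next
    case 3
    show thesis by (rule that[of 2 "- w" "- u"]) (use 3 bounds in \<open>simp_all add: dir_simps\<close>)
  next
    case 4
    show thesis by (rule that[of 3 "- u - w" w]) (use 4 bounds in \<open>simp_all add: dir_simps\<close>)
  next
    case 5
    show thesis by (rule that[of 4 "- u" "u + w"]) (use 5 bounds in \<open>simp_all add: dir_simps\<close>)
  next
    case 6
    show thesis by (rule that[of 5 w u]) (use 6 bounds in \<open>simp_all add: dir_simps\<close>)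
  qed
qed

lemma sector_point_outer:
  assumes "v \<in> S" "k < 6" "0 < \<alpha>" "0 \<le> \<beta>" "\<alpha> + \<beta> < 1"
    and x: "x = emb v + \<alpha> *\<^sub>R dir_vec k + \<beta> *\<^sub>R dir_vec (Suc k)" and xo: "x \<in> outer_face S"
  shows "\<exists>j\<in>free_dirs S v. emb (nbr v j) \<in> outer_face S"
proof -
  have outer_if_avoids: "emb (nbr v j) \<in> outer_face S"
    if "closed_segment x (emb (nbr v j)) \<subseteq> - drawing S" for j
    using outer_face_segment[OF that xo] .
  have Suc_free: "Suc k mod 6 \<in> free_dirs S v" if "nbr v (Suc k) \<notin> S"
    using that unfolding free_dirs_def by (simp add: nbr_mod)
  have "\<beta> = 0 \<or> 0 < \<beta>" using assms(4) by linarith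
  then consider "\<beta> = 0" | "0 < \<beta>" "nbr v k \<notin> S" | "0 < \<beta>" "nbr v (Suc k) \<notin> S"
    | "0 < \<beta>" "nbr v k \<in> S" "nbr v (Suc k) \<in> S"
    by blast
  then show ?thesis
  proof cases
    case 1
    then have x': "x = emb v + \<alpha> *\<^sub>R dir_vec k" using x by simp
    then have "nbr v k \<notin> S"
      using edge_point_in_drawing[OF assms(1), of k \<alpha>] outer_face_notin_drawing[OF xo] assms(3,5) 1
      by auto
    moreover from this have "emb (nbr v k) \<in> outer_face S"
      using outer_if_avoids spoke_segment_avoids_drawing[OF assms(2) _ assms(3)] x' assms(5) 1
      by simp
    ultimately show ?thesis using assms(2) unfolding free_dirs_def by blast
  next
    case 2
    then have "emb (nbr v k) \<in> outer_face S"
      using outer_if_avoids triangle_segment_avoids_drawing[OF assms(2,3) 2(1) assms(5)] x by simp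
    then show ?thesis using 2 assms(2) unfolding free_dirs_def by blast
  next
    case 3
    then have "emb (nbr v (Suc k)) \<in> outer_face S"
      using outer_if_avoids triangle_segment_avoids_drawing[OF assms(2,3) 3(1) assms(5)] x by simp
    then show ?thesis using Suc_free[OF 3(2)] by (metis nbr_mod)
  next
    case 4
    then show ?thesis using filled_triangle_not_outer[OF assms(1) 4(2,3) _ assms(4) _ x] assms(3,5) xo
      by simp
  qed
qed

lemma abs_lat_x_le: "\<bar>lat_x z\<bar> \<le> 2 * cmod z"
proof -
  have "\<bar>Im z / sqrt 3\<bar> \<le> \<bar>Im z\<bar>" by (simp add: abs_divide divide_le_eq_1 mult_le_cancel_left1 field_simps)
  moreover have "\<bar>Re z - Im z / sqrt 3\<bar> \<le> \<bar>Re z\<bar> + \<bar>Im z / sqrt 3\<bar>" by (rule abs_triangle_ineq4)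
  moreover have "\<bar>Re z\<bar> \<le> cmod z" "\<bar>Im z\<bar> \<le> cmod z" by (simp_all add: abs_Re_le_cmod abs_Im_le_cmod)
  ultimately show ?thesis unfolding lat_x_def by linarith
qed

lemma abs_lat_y_le: "\<bar>lat_y z\<bar> \<le> 2 * cmod z"
proof -
  have "\<bar>Im z / sqrt 3\<bar> \<le> \<bar>Im z\<bar>" by (simp add: abs_divide divide_le_eq_1 mult_le_cancel_left1 field_simps)
  moreover have "\<bar>lat_y z\<bar> = 2 * \<bar>Im z / sqrt 3\<bar>" unfolding lat_y_def by (simp add: abs_divide abs_mult)
  moreover have "\<bar>Im z\<bar> \<le> cmod z" by (simp add: abs_Im_le_cmod)
  ultimately show ?thesis by linarith
qed

lemma free_nbr_outer_if_closure:
  assumes "v \<in> S" "emb v \<in> closure (outer_face S)"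
  shows "\<exists>j\<in>free_dirs S v. emb (nbr v j) \<in> outer_face S"
proof -
  obtain x where xo: "x \<in> outer_face S" and "dist x (emb v) < 1/8"
    using assms(2)[unfolded closure_approachable, rule_format, of "1/8"] by auto
  then have dx: "cmod (x - emb v) < 1/8" by (simp add: dist_norm)
  define u w where "u = lat_x (x - emb v)" and "w = lat_y (x - emb v)"
  have "\<bar>u\<bar> < 1/4" "\<bar>w\<bar> < 1/4"
    using abs_lat_x_le[of "x - emb v"] abs_lat_y_le[of "x - emb v"] dx unfolding u_def w_def by linarith+
  moreover have "x \<noteq> emb v" using outer_face_notin_drawing[OF xo] assms(1) by auto
  then have "u \<noteq> 0 \<or> w \<noteq> 0" using lat_eqI[of x "emb v"] unfolding u_def w_def by auto
  ultimately obtain k \<alpha> \<beta> where sector: "k < 6" "0 < \<alpha>" "0 \<le> \<beta>" "\<alpha> + \<beta> < 1"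
    and "u = \<alpha> * of_int (fst (dir k)) + \<beta> * of_int (fst (dir (Suc k)))"
    and "w = \<alpha> * of_int (snd (dir k)) + \<beta> * of_int (snd (dir (Suc k)))"
    by (rule hexagon_sector_decomposition)
  then have "x = emb v + \<alpha> *\<^sub>R dir_vec k + \<beta> *\<^sub>R dir_vec (Suc k)"
    by (intro lat_eqI) (simp_all add: u_def w_def algebra_simps)
  then show ?thesis using sector_point_outer[OF assms(1) sector _ xo] by blast
qed

lemma outer_boundary_if_free_nbr_outer:
  assumes "v \<in> S" "j \<in> free_dirs S v" "emb (nbr v j) \<in> outer_face S"
  shows "v \<in> outer_boundary S"
proof -
  have j: "j < 6" "nbr v j \<notin> S" using assms(2) unfolding free_dirs_def by auto
  have "open_segment (emb v) (emb (nbr v j)) \<subseteq> outer_face S"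
  proof
    fix y assume "y \<in> open_segment (emb v) (emb (nbr v j))"
    then obtain t where t: "0 < t" "t < 1" "y = (1 - t) *\<^sub>R emb v + t *\<^sub>R emb (nbr v j)"
      unfolding in_segment by blast
    have "y = emb v + t *\<^sub>R dir_vec j" using t(3) unfolding emb_nbr by (simp add: algebra_simps)
    then show "y \<in> outer_face S"
      using outer_face_segment[OF _ assms(3), of y] spoke_segment_avoids_drawing[OF j t(1)] t(2)
      by (simp add: closed_segment_commute)
  qed
  then have "closure (open_segment (emb v) (emb (nbr v j))) \<subseteq> closure (outer_face S)"
    by (rule closure_mono)
  moreover have "emb v \<noteq> emb (nbr v j)" using assms(1) j(2) by auto
  ultimately have "emb v \<in> closure (outer_face S)" by auto
  moreover have "emb v \<notin> outer_face S" using outer_face_notin_drawing[of "emb v" S] assms(1) by auto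
  then have "emb v \<notin> interior (outer_face S)" using interior_subset by blast
  ultimately show ?thesis unfolding outer_boundary_def frontier_def using assms(1) by simp
qed

lemma outer_boundary_iff_free_nbr_outer:
  assumes "v \<in> S"
  shows "v \<in> outer_boundary S \<longleftrightarrow> (\<exists>j\<in>free_dirs S v. emb (nbr v j) \<in> outer_face S)"
  using free_nbr_outer_if_closure[OF assms] outer_boundary_if_free_nbr_outer[OF assms]
  unfolding outer_boundary_def frontier_def by auto

lemma free_nbrs_Suc_outer_iff:
  assumes "nbr v j \<notin> S" "nbr v (Suc j) \<notin> S"
  shows "emb (nbr v j) \<in> outer_face S \<longleftrightarrow> emb (nbr v (Suc j)) \<in> outer_face S"
proof -
  have "nbr (nbr v j) ((j + 2) mod 6) = nbr v (Suc j)" by (simp only: nbr_mod nbr_nbr_add_2)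
  then have "closed_segment (emb (nbr v j)) (emb (nbr v (Suc j))) \<subseteq> - drawing S"
    using edge_avoids_drawing[of "(j + 2) mod 6" "nbr v j" S] assms by simp
  then show ?thesis using outer_face_segment[of _ _ S] by (metis closed_segment_commute)
qed


section \<open>Connected sets and intervals on the 6-cycle\<close>

definition cyc_adj :: "nat \<Rightarrow> nat \<Rightarrow> bool" where
  "cyc_adj i j \<longleftrightarrow> j = Suc i mod 6 \<or> i = Suc j mod 6"

definition cyc_connected :: "nat set \<Rightarrow> bool" where
  "cyc_connected N \<longleftrightarrow> (\<forall>i\<in>N. \<forall>j\<in>N. (i, j) \<in> {(a, b). a \<in> N \<and> b \<in> N \<and> cyc_adj a b}\<^sup>*)"

definition cyc_arc :: "nat \<Rightarrow> nat \<Rightarrow> nat set" where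
  "cyc_arc s k = {(s + j) mod 6 | j. j < k}"

definition cyc_offset :: "nat \<Rightarrow> nat \<Rightarrow> nat" where
  "cyc_offset s i = (i + 6 - s mod 6) mod 6"

lemma cyc_offset_less: "cyc_offset s i < 6"
  unfolding cyc_offset_def by simp

lemma add_cyc_offset_mod:
  assumes "i < 6"
  shows "(s + cyc_offset s i) mod 6 = i"
proof -
  have "(s + cyc_offset s i) mod 6 = (s mod 6 + cyc_offset s i) mod 6" by (simp add: mod_add_left_eq)
  then show ?thesis
    unfolding cyc_offset_def using mod_6_cases[of s] less_6_cases[OF assms]
    by (elim disjE) simp_all
qed

lemma cyc_offset_add_mod:
  assumes "j < 6"
  shows "cyc_offset s ((s + j) mod 6) = j"
proof -
  have "(s + j) mod 6 = (s mod 6 + j) mod 6" by (simp add: mod_add_left_eq)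
  then show ?thesis
    unfolding cyc_offset_def using mod_6_cases[of s] less_6_cases[OF assms]
    by (elim disjE) simp_all
qed

lemma cyc_offset_cyc_adj:
  assumes "i < 6" "j < 6" "cyc_adj i j"
  shows "cyc_offset s j = Suc (cyc_offset s i) mod 6 \<or> cyc_offset s i = Suc (cyc_offset s j) mod 6"
  using mod_6_cases[of s] less_6_cases[OF assms(1)] less_6_cases[OF assms(2)] assms(3)
  unfolding cyc_offset_def cyc_adj_def by (elim disjE) simp_all

lemma cyc_offset_complement:
  assumes "i < 6" "k < 6"
  shows "\<not> cyc_offset s i < k \<longleftrightarrow> cyc_offset (s + k) i < 6 - k"
proof -
  have "(s + k) mod 6 = (s mod 6 + k) mod 6" by (simp add: mod_add_left_eq)
  then show ?thesis
    unfolding cyc_offset_def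
    using mod_6_cases[of s] less_6_cases[OF assms(1)] less_6_cases[OF assms(2)]
    by (elim disjE) simp_all
qed

lemma mem_cyc_arc_iff:
  assumes "k \<le> 6"
  shows "i \<in> cyc_arc s k \<longleftrightarrow> i < 6 \<and> cyc_offset s i < k"
proof
  assume "i \<in> cyc_arc s k"
  then obtain j where "j < k" "i = (s + j) mod 6" unfolding cyc_arc_def by blast
  then show "i < 6 \<and> cyc_offset s i < k" using cyc_offset_add_mod[of j s] assms by simp
next
  assume "i < 6 \<and> cyc_offset s i < k"
  then show "i \<in> cyc_arc s k" unfolding cyc_arc_def using add_cyc_offset_mod[of i s] by force
qed

lemma cyc_arc_mod: "cyc_arc (s mod 6) k = cyc_arc s k"
  unfolding cyc_arc_def by (simp add: mod_add_left_eq)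

lemma cyc_arc_6: "cyc_arc s 6 = {0..<6}"
  using mem_cyc_arc_iff[of 6 _ s] cyc_offset_less by auto

lemma cyclic_interval_iff_cyc_arc: "cyclic_interval I \<longleftrightarrow> (\<exists>s<6. \<exists>k. 1 \<le> k \<and> k \<le> 6 \<and> I = cyc_arc s k)"
  unfolding cyclic_interval_def cyc_arc_def ..

lemma cyclic_interval_subset: "cyclic_interval I \<Longrightarrow> I \<subseteq> {0..<6}"
  unfolding cyclic_interval_def by auto

lemma cyclic_interval_nonempty: "cyclic_interval I \<Longrightarrow> I \<noteq> {}"
  unfolding cyclic_interval_def by (auto dest: spec[of _ 0])

lemma cyclic_interval_singleton: "i < 6 \<Longrightarrow> cyclic_interval {i}"
  unfolding cyclic_interval_def by (intro exI[of _ i] conjI exI[of _ 1]) auto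

lemma cyc_arc_complement:
  assumes "1 \<le> k" "k < 6"
  shows "{0..<6} - cyc_arc s k = cyc_arc (s + k) (6 - k)"
  using cyc_offset_complement[OF _ assms(2), of _ s] mem_cyc_arc_iff[of k _ s] mem_cyc_arc_iff[of "6 - k" _ "s + k"] assms
  by auto

lemma cyclic_interval_complement:
  assumes "cyclic_interval I" "I \<noteq> {0..<6}"
  shows "cyclic_interval ({0..<6} - I)"
proof -
  obtain s k where sk: "s < 6" "1 \<le> k" "k \<le> 6" "I = cyc_arc s k"
    using assms(1) cyclic_interval_iff_cyc_arc by blast
  then have "k < 6" using assms(2) cyc_arc_6 by fastforce
  then have "(s + k) mod 6 < 6 \<and> 1 \<le> 6 - k \<and> 6 - k \<le> 6 \<and> {0..<6} - I = cyc_arc ((s + k) mod 6) (6 - k)"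
    using cyc_arc_complement[OF sk(2)] sk(4) by (simp add: cyc_arc_mod)
  then show ?thesis unfolding cyclic_interval_iff_cyc_arc by blast
qed

lemma cyc_connected_cyc_arc: "cyc_connected (cyc_arc s k)"
proof -
  let ?R = "{(a, b). a \<in> cyc_arc s k \<and> b \<in> cyc_arc s k \<and> cyc_adj a b}"
  have from_start: "(s mod 6, (s + l) mod 6) \<in> ?R\<^sup>*" if "l < k" for l
    using that
  proof (induction l)
    case (Suc l)
    have "(s + l) mod 6 \<in> cyc_arc s k" "(s + Suc l) mod 6 \<in> cyc_arc s k"
      using Suc.prems unfolding cyc_arc_def by (blast dest: Suc_lessD)+
    moreover have "cyc_adj ((s + l) mod 6) ((s + Suc l) mod 6)"
      unfolding cyc_adj_def by (simp add: mod_Suc_eq)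
    ultimately have "((s + l) mod 6, (s + Suc l) mod 6) \<in> ?R" by simp
    then show ?case using Suc by (meson Suc_lessD rtrancl_into_rtrancl)
  qed simp
  have "sym ?R" unfolding sym_def cyc_adj_def by blast
  then have sym: "(b, a) \<in> ?R\<^sup>*" if "(a, b) \<in> ?R\<^sup>*" for a b
    using sym_rtrancl that unfolding sym_def by blast
  show ?thesis unfolding cyc_connected_def
  proof (intro ballI)
    fix i j assume "i \<in> cyc_arc s k" "j \<in> cyc_arc s k"
    then obtain a b where "a < k" "i = (s + a) mod 6" "b < k" "j = (s + b) mod 6"
      unfolding cyc_arc_def by blast
    then show "(i, j) \<in> ?R\<^sup>*" using from_start sym by (meson rtrancl_trans)
  qed
qed

lemma cyc_offset_cyc_adj_between:
  assumes "i < 6" "j < 6" "cyc_adj i j" "0 < cyc_offset s i" "cyc_offset s i < T" "T < 6"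
    and "cyc_offset s j \<noteq> 0" "cyc_offset s j \<noteq> T"
  shows "0 < cyc_offset s j \<and> cyc_offset s j < T"
proof -
  consider "cyc_offset s j = Suc (cyc_offset s i) mod 6" | "cyc_offset s i = Suc (cyc_offset s j) mod 6"
    using cyc_offset_cyc_adj[OF assms(1-3)] by blast
  then show ?thesis
  proof cases
    case 1
    moreover have "Suc (cyc_offset s i) < 6" using assms(5,6) by linarith
    ultimately show ?thesis using assms(5,8) by simp
  next
    case 2
    moreover have "Suc (cyc_offset s j) \<noteq> 6" using 2 assms(4) by auto
    then have "Suc (cyc_offset s j) < 6" using cyc_offset_less[of s j] by linarith
    ultimately show ?thesis using assms(5,7) by simp
  qed
qed

text \<open>A path in \<open>N\<close> cannot pass from one side of two gaps \<open>s\<close>, \<open>s + T\<close> of \<open>N\<close> to the other: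
  along the path the offset from \<open>s\<close> moves by one at a time and never takes the values
  \<open>0\<close> or \<open>T\<close>.\<close>

lemma cyc_connected_separation:
  assumes conn: "cyc_connected N" and N: "N \<subseteq> {0..<6}" and s: "s < 6" "s \<notin> N"
    and T: "(s + T) mod 6 \<notin> N"
    and a: "a \<in> N" "cyc_offset s a < T" and b: "b \<in> N" "T < cyc_offset s b"
  shows False
proof -
  let ?R = "{(x, y). x \<in> N \<and> y \<in> N \<and> cyc_adj x y}"
  define X where "X = {x. x < 6 \<and> 0 < cyc_offset s x \<and> cyc_offset s x < T}"
  have T6: "T < 6" using b(2) cyc_offset_less[of s b] by linarith
  have pos: "0 < cyc_offset s y" if "y \<in> N" for y
  proof (rule ccontr)
    assume "\<not> 0 < cyc_offset s y"
    then have "y = s" using add_cyc_offset_mod[of y s] that N s(1) by auto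
    then show False using that s(2) by simp
  qed
  have closed: "y \<in> X" if "x \<in> X" "(x, y) \<in> ?R" for x y
  proof -
    have y: "y \<in> N" "y < 6" and "x < 6" "cyc_adj x y" using that N unfolding X_def by auto
    moreover have "cyc_offset s y \<noteq> T" using T add_cyc_offset_mod[OF y(2), of s] y(1) by auto
    ultimately show "y \<in> X"
      using cyc_offset_cyc_adj_between[of x y s T] that(1) T6 pos unfolding X_def by auto
  qed
  have "(a, b) \<in> ?R\<^sup>*" using conn a(1) b(1) unfolding cyc_connected_def by blast
  then have "b \<in> X"
  proof (induction rule: rtrancl_induct)
    case base
    show ?case using a N pos unfolding X_def by auto
  next
    case (step y z)
    then show ?case using closed by blast
  qed
  then show False using b(2) unfolding X_def by simp
qed

lemma cyc_gap_before_member: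
  assumes "N \<subseteq> {0..<6}" "N \<noteq> {}" "N \<noteq> {0..<6}"
  obtains s where "s < 6" "s \<notin> N" "Suc s mod 6 \<in> N"
proof (rule ccontr)
  assume "\<not> thesis"
  then have step: "i < 6 \<Longrightarrow> i \<notin> N \<Longrightarrow> Suc i mod 6 \<notin> N" for i using that by blast
  have "\<not> {0..<6} \<subseteq> N" using assms(1,3) by blast
  then obtain f where "f \<in> {0..<6}" "f \<notin> N" by blast
  then have f: "f < 6" "f \<notin> N" by simp_all
  have none: "(f + j) mod 6 \<notin> N" for j
  proof (induction j)
    case (Suc j)
    then show ?case using step[of "(f + j) mod 6"] by (simp add: mod_Suc_eq)
  qed (use f in simp)
  obtain n where "n \<in> N" using assms(2) by blast
  moreover from this have "(f + cyc_offset f n) mod 6 = n" using assms(1) by (intro add_cyc_offset_mod) auto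
  ultimately show False using none[of "cyc_offset f n"] by simp
qed

text \<open>Pick a gap \<open>s\<close> of \<open>N\<close> followed by an element of \<open>N\<close>; then \<open>N\<close> is the run of elements
  starting at \<open>s + 1\<close>, because any further element would be separated from that run by \<open>s\<close>
  and the gap ending the run.\<close>

lemma cyc_connected_imp_cyclic_interval:
  assumes conn: "cyc_connected N" and N: "N \<subseteq> {0..<6}" "N \<noteq> {}" "N \<noteq> {0..<6}"
  shows "cyclic_interval N"
proof -
  obtain s where s: "s < 6" "s \<notin> N" "Suc s mod 6 \<in> N" using cyc_gap_before_member[OF N] .
  define m where "m = (LEAST m. 0 < m \<and> (s + m) mod 6 \<notin> N)"
  have m: "0 < m" "(s + m) mod 6 \<notin> N"
    using LeastI[of "\<lambda>m. 0 < m \<and> (s + m) mod 6 \<notin> N" 6] s(1,2) unfolding m_def by auto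
  have "m \<le> 6" unfolding m_def by (rule Least_le) (use s in simp)
  have inside: "(s + l) mod 6 \<in> N" if "0 < l" "l < m" for l
    using not_less_Least[of l "\<lambda>m. 0 < m \<and> (s + m) mod 6 \<notin> N"] that unfolding m_def by blast
  have "m \<noteq> 1" using s(3) m(2) by auto
  have "N = cyc_arc (Suc s) (m - 1)"
  proof
    show "cyc_arc (Suc s) (m - 1) \<subseteq> N"
    proof
      fix i assume "i \<in> cyc_arc (Suc s) (m - 1)"
      then obtain j where "j < m - 1" "i = (Suc s + j) mod 6" unfolding cyc_arc_def by blast
      then show "i \<in> N" using inside[of "Suc j"] by simp
    qed
    show "N \<subseteq> cyc_arc (Suc s) (m - 1)"
    proof
      fix n assume n: "n \<in> N"
      define d where "d = cyc_offset s n"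
      have n_eq: "(s + d) mod 6 = n" unfolding d_def using n N(1) add_cyc_offset_mod by auto
      have "d \<noteq> 0"
      proof
        assume "d = 0"
        then show False using n_eq n s(1,2) by simp
      qed
      moreover have "d < m"
      proof (rule ccontr)
        assume "\<not> d < m"
        moreover have "d \<noteq> m" using n n_eq m(2) by auto
        ultimately have "m < d" by simp
        moreover have "cyc_offset s (Suc s mod 6) < m" using cyc_offset_add_mod[of 1 s] \<open>m \<noteq> 1\<close> m(1) by simp
        ultimately show False using cyc_connected_separation[OF conn N(1) s(1,2) m(2) s(3) _ n]
          unfolding d_def by blast
      qed
      moreover have "Suc s + (d - 1) = s + d" using \<open>d \<noteq> 0\<close> by simp
      ultimately show "n \<in> cyc_arc (Suc s) (m - 1)"
        unfolding cyc_arc_def using n_eq by (intro CollectI exI[of _ "d - 1"]) simp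
    qed
  qed
  moreover have "1 \<le> m - 1" "m - 1 \<le> 6" using \<open>m \<noteq> 1\<close> m(1) \<open>m \<le> 6\<close> by linarith+
  ultimately have "Suc s mod 6 < 6 \<and> 1 \<le> m - 1 \<and> m - 1 \<le> 6 \<and> N = cyc_arc (Suc s mod 6) (m - 1)"
    by (simp add: cyc_arc_mod)
  then show ?thesis unfolding cyclic_interval_iff_cyc_arc by blast
qed

lemma cyc_connected_complement_iff:
  assumes "F \<subseteq> {0..<6}" "F \<noteq> {}" "F \<noteq> {0..<6}"
  shows "cyc_connected ({0..<6} - F) \<longleftrightarrow> cyclic_interval F"
proof
  have N: "{0..<6} - F \<subseteq> {0..<6}" "{0..<6} - F \<noteq> {}" "{0..<6} - F \<noteq> {0..<6}"
    using assms by blast+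
  assume "cyc_connected ({0..<6} - F)"
  then have "cyclic_interval ({0..<6} - F)" using N by (rule cyc_connected_imp_cyclic_interval)
  then have "cyclic_interval ({0..<6} - ({0..<6} - F))" using N(3) by (rule cyclic_interval_complement)
  then show "cyclic_interval F" using assms(1) by (simp add: double_diff)
next
  assume "cyclic_interval F"
  then have "cyclic_interval ({0..<6} - F)" using assms(3) by (rule cyclic_interval_complement)
  then obtain s k where "{0..<6} - F = cyc_arc s k" unfolding cyclic_interval_iff_cyc_arc by blast
  then show "cyc_connected ({0..<6} - F)" using cyc_connected_cyc_arc by simp
qed


section \<open>Local boundaries and erodability\<close>

lemma ex_less_6_iff: "(\<exists>l<6. P l) \<longleftrightarrow> P 0 \<or> P 1 \<or> P 2 \<or> P 3 \<or> P 4 \<or> P (5::nat)"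
proof
  assume "\<exists>l<6. P l"
  then obtain l where "l < 6" "P l" by blast
  then show "P 0 \<or> P 1 \<or> P 2 \<or> P 3 \<or> P 4 \<or> P 5" using less_6_cases[of l] by auto
next
  have "(0::nat) < 6" "(1::nat) < 6" "(2::nat) < 6" "(3::nat) < 6" "(4::nat) < 6" "(5::nat) < 6"
    by simp_all
  then show "P 0 \<or> P 1 \<or> P 2 \<or> P 3 \<or> P 4 \<or> P 5 \<Longrightarrow> \<exists>l<6. P l" by blast
qed

lemma adj_nbr_nbr_iff:
  assumes "i < 6" "j < 6"
  shows "adj (nbr v i) (nbr v j) \<longleftrightarrow> cyc_adj i j"
  unfolding adj_def ex_less_6_iff cyc_adj_def using less_6_cases[OF assms(1)] less_6_cases[OF assms(2)]
  by (elim disjE) (simp_all add: nbr_def dir_simps prod_eq_iff)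

lemma nbr_eq_nbr_iff:
  assumes "i < 6" "j < 6"
  shows "nbr v i = nbr v j \<longleftrightarrow> i = j"
  using less_6_cases[OF assms(1)] less_6_cases[OF assms(2)]
  by (elim disjE) (simp_all add: nbr_def dir_simps prod_eq_iff)

lemma grid_connected_image_iff:
  assumes "inj_on f A" and "\<And>x y. x \<in> A \<Longrightarrow> y \<in> A \<Longrightarrow> adj (f x) (f y) \<longleftrightarrow> R x y"
  shows "grid_connected (f ` A) \<longleftrightarrow> (\<forall>x\<in>A. \<forall>y\<in>A. (x, y) \<in> {(a, b). a \<in> A \<and> b \<in> A \<and> R a b}\<^sup>*)"
proof -
  let ?RA = "{(a, b). a \<in> A \<and> b \<in> A \<and> R a b}"
  let ?RI = "{(p, q). p \<in> f ` A \<and> q \<in> f ` A \<and> adj p q}"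
  have to_image: "(f x, f y) \<in> ?RI\<^sup>*" if "(x, y) \<in> ?RA\<^sup>*" for x y
    using that
  proof (induction rule: rtrancl_induct)
    case (step y z)
    then have "(f y, f z) \<in> ?RI" using assms(2) by auto
    with step.IH show ?case by (rule rtrancl_into_rtrancl)
  qed simp
  have from_image: "\<exists>y\<in>A. q = f y \<and> (x, y) \<in> ?RA\<^sup>*" if "(f x, q) \<in> ?RI\<^sup>*" "x \<in> A" for x q
    using that(1)
  proof (induction rule: rtrancl_induct)
    case base
    then show ?case using that(2) by blast
  next
    case (step q r)
    then obtain y where y: "y \<in> A" "q = f y" "(x, y) \<in> ?RA\<^sup>*" by blast
    from step.hyps(2) obtain z where z: "z \<in> A" "r = f z" "adj q r" by auto
    then have "(y, z) \<in> ?RA" using assms(2) y by auto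
    with y(3) have "(x, z) \<in> ?RA\<^sup>*" by (rule rtrancl_into_rtrancl)
    then show ?case using z by blast
  qed
  show ?thesis
  proof
    assume conn: "grid_connected (f ` A)"
    show "\<forall>x\<in>A. \<forall>y\<in>A. (x, y) \<in> ?RA\<^sup>*"
    proof (intro ballI)
      fix x y assume xy: "x \<in> A" "y \<in> A"
      then have "(f x, f y) \<in> ?RI\<^sup>*" using conn unfolding grid_connected_def by blast
      then obtain y' where "y' \<in> A" "f y = f y'" "(x, y') \<in> ?RA\<^sup>*" using from_image xy(1) by blast
      then show "(x, y) \<in> ?RA\<^sup>*" using inj_onD[OF assms(1)] xy(2) by metis
    qed
  next
    assume "\<forall>x\<in>A. \<forall>y\<in>A. (x, y) \<in> ?RA\<^sup>*"
    then show "grid_connected (f ` A)" unfolding grid_connected_def using to_image by blast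
  qed
qed

lemma redundant_iff_cyc_connected:
  assumes "v \<in> S"
  shows "redundant S v \<longleftrightarrow> cyc_connected ({0..<6} - free_dirs S v)"
proof -
  let ?N = "{0..<6} - free_dirs S v"
  have "{q \<in> S. adj v q} = nbr v ` ?N" unfolding free_dirs_def adj_def by auto
  moreover have "grid_connected (nbr v ` ?N) \<longleftrightarrow> cyc_connected ?N"
    unfolding cyc_connected_def
    by (rule grid_connected_image_iff) (auto intro: inj_onI simp: nbr_eq_nbr_iff adj_nbr_nbr_iff)
  ultimately show ?thesis unfolding redundant_def using assms by simp
qed

lemma free_dirs_neq_all:
  assumes "connected_shape S" "2 \<le> card S" "v \<in> S"
  shows "free_dirs S v \<noteq> {0..<6}"
proof -
  have "\<not> S \<subseteq> {v}"
  proof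
    assume "S \<subseteq> {v}"
    then have "card S \<le> 1" using card_mono[of "{v}" S] by simp
    then show False using assms(2) by simp
  qed
  then obtain q where q: "q \<in> S" "q \<noteq> v" by blast
  have "(v, q) \<in> {(x, y). x \<in> S \<and> y \<in> S \<and> adj x y}\<^sup>*"
    using assms(1,3) q(1) unfolding connected_shape_def grid_connected_def by blast
  then obtain y where "(v, y) \<in> {(x, y). x \<in> S \<and> y \<in> S \<and> adj x y}"
    using q(2) by (blast elim: converse_rtranclE)
  then have "y \<in> S" "adj v y" by auto
  then obtain i where "i < 6" "nbr v i \<in> S" unfolding adj_def by blast
  then have "i \<in> {0..<6}" "i \<notin> free_dirs S v" unfolding free_dirs_def by simp_all
  then show ?thesis by blast
qed

lemma free_interval_iff: "free_interval S v I \<longleftrightarrow> cyclic_interval I \<and> I \<subseteq> free_dirs S v"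
proof -
  have "cyclic_interval I \<Longrightarrow> (\<forall>i\<in>I. nbr v i \<notin> S) \<longleftrightarrow> I \<subseteq> free_dirs S v"
    using cyclic_interval_subset[of I] unfolding free_dirs_def by auto
  then show ?thesis unfolding free_interval_def by blast
qed

lemma local_boundary_exists:
  assumes "i \<in> free_dirs S v"
  obtains J where "local_boundary S v J" "i \<in> J"
proof -
  let ?F = "free_dirs S v"
  let ?A = "{J. cyclic_interval J \<and> J \<subseteq> ?F}"
  have "?A \<subseteq> Pow {0..<6}" using cyclic_interval_subset by blast
  then have "finite ?A" by (rule finite_subset) simp
  moreover have "i < 6" using assms unfolding free_dirs_def by simp
  then have "{i} \<in> ?A" using assms cyclic_interval_singleton by simp
  ultimately obtain J where J: "J \<in> ?A" "{i} \<subseteq> J" "\<forall>J'\<in>?A. J \<subseteq> J' \<longrightarrow> J = J'"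
    using finite_has_maximal2[of ?A "{i}"] by blast
  have "local_boundary S v J"
    unfolding local_boundary_def free_interval_iff
  proof (intro conjI allI impI)
    show "cyclic_interval J" "J \<subseteq> ?F" using J(1) by simp_all
  next
    fix J' assume "(cyclic_interval J' \<and> J' \<subseteq> ?F) \<and> J \<subseteq> J'"
    then have "J' \<in> ?A" "J \<subseteq> J'" by simp_all
    then show "J' = J" using J(3) by blast
  qed
  with J(2) show thesis using that by blast
qed

lemma unique_local_boundary_iff:
  "(\<forall>B'. local_boundary S v B' \<longleftrightarrow> B' = B) \<longleftrightarrow>
     cyclic_interval (free_dirs S v) \<and> B = free_dirs S v"
proof
  let ?F = "free_dirs S v"
  assume unique: "\<forall>B'. local_boundary S v B' \<longleftrightarrow> B' = B"
  then have "local_boundary S v B" by simp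
  then have B: "cyclic_interval B" "B \<subseteq> ?F" unfolding local_boundary_def free_interval_iff by simp_all
  have "?F \<subseteq> B"
  proof
    fix i assume "i \<in> ?F"
    then obtain J where "local_boundary S v J" "i \<in> J" by (rule local_boundary_exists)
    then show "i \<in> B" using unique by simp
  qed
  then show "cyclic_interval ?F \<and> B = ?F" using B by simp
next
  let ?F = "free_dirs S v"
  assume F: "cyclic_interval ?F \<and> B = ?F"
  show "\<forall>B'. local_boundary S v B' \<longleftrightarrow> B' = B"
  proof (intro allI iffI)
    fix B' assume "local_boundary S v B'"
    then have "B' \<subseteq> ?F" "cyclic_interval ?F \<and> ?F \<subseteq> ?F \<and> B' \<subseteq> ?F \<longrightarrow> ?F = B'"
      unfolding local_boundary_def free_interval_iff by simp_all
    then show "B' = B" using F by simp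
  next
    fix B' assume "B' = B"
    then show "local_boundary S v B'"
      unfolding local_boundary_def free_interval_iff using F by blast
  qed
qed

lemma unique_local_outer_boundary_iff:
  "(\<exists>B. (\<forall>B'. local_boundary S v B' \<longleftrightarrow> B' = B) \<and> local_outer_boundary S v B) \<longleftrightarrow>
     cyclic_interval (free_dirs S v) \<and> (\<forall>i\<in>free_dirs S v. emb (nbr v i) \<in> outer_face S)"
    (is "?lhs \<longleftrightarrow> ?rhs")
proof
  assume ?lhs
  then obtain B where "\<forall>B'. local_boundary S v B' \<longleftrightarrow> B' = B" "local_outer_boundary S v B" by blast
  then show ?rhs unfolding local_outer_boundary_def unique_local_boundary_iff by simp
next
  assume ?rhs
  then have unique: "\<forall>B'. local_boundary S v B' \<longleftrightarrow> B' = free_dirs S v"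
    by (simp add: unique_local_boundary_iff)
  then have "local_outer_boundary S v (free_dirs S v)"
    unfolding local_outer_boundary_def using \<open>?rhs\<close> by simp
  with unique show ?lhs by blast
qed

lemma free_interval_outer_iff:
  assumes "cyclic_interval I" "I \<subseteq> free_dirs S v" "i \<in> I" "j \<in> I"
  shows "emb (nbr v i) \<in> outer_face S \<longleftrightarrow> emb (nbr v j) \<in> outer_face S"
proof -
  obtain s k where sk: "s < 6" "I = cyc_arc s k" using assms(1) cyclic_interval_iff_cyc_arc by blast
  have "emb (nbr v ((s + l) mod 6)) \<in> outer_face S \<longleftrightarrow> emb (nbr v s) \<in> outer_face S" if "l < k" for l
    using that
  proof (induction l)
    case (Suc l)
    have "(s + l) mod 6 \<in> I" "(s + Suc l) mod 6 \<in> I"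
      using Suc.prems unfolding sk(2) cyc_arc_def by (blast dest: Suc_lessD)+
    moreover have e: "nbr v (Suc ((s + l) mod 6)) = nbr v ((s + Suc l) mod 6)"
      by (metis nbr_mod mod_Suc_eq add_Suc_right)
    ultimately have "nbr v ((s + l) mod 6) \<notin> S" "nbr v (Suc ((s + l) mod 6)) \<notin> S"
      using assms(2) unfolding free_dirs_def by auto
    from free_nbrs_Suc_outer_iff[OF this] show ?case using Suc e by simp
  qed (use sk(1) in simp)
  then show ?thesis using assms(3,4) unfolding sk(2) cyc_arc_def by auto
qed

lemma erodable_iff_free_dirs:
  assumes "v \<in> S" "free_dirs S v \<noteq> {0..<6}"
  shows "erodable S v \<longleftrightarrow>
    cyclic_interval (free_dirs S v) \<and> (\<exists>i\<in>free_dirs S v. emb (nbr v i) \<in> outer_face S)"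
proof -
  have "free_dirs S v \<subseteq> {0..<6}" unfolding free_dirs_def by auto
  then have "cyc_connected ({0..<6} - free_dirs S v) \<longleftrightarrow> cyclic_interval (free_dirs S v)"
    if "free_dirs S v \<noteq> {}"
    using cyc_connected_complement_iff that assms(2) by blast
  then show ?thesis
    unfolding erodable_def redundant_iff_cyc_connected[OF assms(1)]
      outer_boundary_iff_free_nbr_outer[OF assms(1)]
    using cyclic_interval_nonempty by blast
qed

theorem proposition2p2:
  fixes S :: "point set" and v :: point
  assumes "connected_shape S" and "card S \<ge> 2" and "v \<in> S"
  shows "erodable S v \<longleftrightarrow>
           (\<exists>B. (\<forall>B'. local_boundary S v B' \<longleftrightarrow> B' = B) \<and> local_outer_boundary S v B)"
proof -
  let ?F = "free_dirs S v"
  let ?outer = "\<lambda>i. emb (nbr v i) \<in> outer_face S"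
  have "erodable S v \<longleftrightarrow> cyclic_interval ?F \<and> (\<exists>i\<in>?F. ?outer i)"
    using erodable_iff_free_dirs[OF assms(3) free_dirs_neq_all[OF assms]] .
  also have "\<dots> \<longleftrightarrow> cyclic_interval ?F \<and> (\<forall>i\<in>?F. ?outer i)"
    using free_interval_outer_iff[of ?F S v] cyclic_interval_nonempty[of ?F] by blast
  also have "\<dots> \<longleftrightarrow> (\<exists>B. (\<forall>B'. local_boundary S v B' \<longleftrightarrow> B' = B) \<and> local_outer_boundary S v B)"
    by (rule unique_local_outer_boundary_iff[symmetric])
  finally show ?thesis .
qed

end
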